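(* Let $H$ be a finite normal subgroup of a group $G$ such that the center of $H$ is trivial. If $G/H$ is a Jordan group, then $G$ is a Jordan group and $J_G\leqslant |\mathrm{Aut}(H)|\, J_{G/H}^{|\mathrm{Aut}(H)|}$.
   Context: A group $G$ is called Jordan if there exists a positive integer $d$ such that every finite subgroup $K$ of $G$ contains a normal abelian subgroup of index at most $d$ in $K$; the minimal such $d$ is the Jordan constant $J_G$. *)

theory Defs
  imports "HOL-Algebra.Algebra"
begin

definition group_center :: "('a, 'b) monoid_scheme \<Rightarrow> 'a set" where
  "group_center G = {z \<in> carrier G. \<forall>g \<in> carrier G. z \<otimes>\<^bsub>G\<^esub> g = g \<otimes>\<^bsub>G\<^esub> z}"

definition jordan_bound :: "('a, 'b) monoid_scheme \<Rightarrow> nat \<Rightarrow> bool" where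
  "jordan_bound G d \<longleftrightarrow>
     (\<forall>K. subgroup K G \<and> finite K \<longrightarrow>
        (\<exists>A. A \<subseteq> K \<and> A \<lhd> G\<lparr>carrier := K\<rparr> \<and>
             (\<forall>x \<in> A. \<forall>y \<in> A. x \<otimes>\<^bsub>G\<^esub> y = y \<otimes>\<^bsub>G\<^esub> x) \<and>
             card K \<le> d * card A))"

definition jordan_group :: "('a, 'b) monoid_scheme \<Rightarrow> bool" where
  "jordan_group G \<longleftrightarrow> (\<exists>d > 0. jordan_bound G d)"

definition jordan_constant :: "('a, 'b) monoid_scheme \<Rightarrow> nat" where
  "jordan_constant G = (LEAST d. d > 0 \<and> jordan_bound G d)"

end

theory Submission
  imports Defs
begin

text \<open>Let K be a finite subgroup of G, C the centralizer of H in K, and J the Jordan constant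
  of G/H. Conjugation maps K into Aut(H) with the left cosets of C as fibres, so
  [K:C] \<le> |Aut(H)|. Since C \<inter> H lies in the trivial centre of H, C embeds into G/H and hence
  has an abelian normal subgroup B of index at most J. As C normalizes B, the K-conjugates of B
  are indexed by K/C; their intersection A is abelian and normal in K, and the product formula
  |N| |M| \<le> |C| |N \<inter> M| bounds its index in C by J^[K:C].\<close>

lemma card_le_card_image_mult:
  assumes "finite A" and "\<And>y. y \<in> f ` A \<Longrightarrow> card {x \<in> A. f x = y} \<le> k"
  shows "card A \<le> card (f ` A) * k"
proof -
  have "A = (\<Union>y \<in> f ` A. {x \<in> A. f x = y})" by blast
  then have "card A \<le> (\<Sum>y \<in> f ` A. card {x \<in> A. f x = y})"
    by (metis card_UN_le assms(1) finite_imageI)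
  also have "\<dots> \<le> (\<Sum>y \<in> f ` A. k)" using assms(2) by (rule sum_mono)
  finally show ?thesis by (simp add: mult.commute)
qed

lemma card_image_le_card_image:
  assumes "finite A" and "\<And>x y. x \<in> A \<Longrightarrow> y \<in> A \<Longrightarrow> f x = f y \<Longrightarrow> g x = g y"
  shows "card (g ` A) \<le> card (f ` A)"
proof -
  define s where "s y = (SOME x. x \<in> A \<and> f x = y)" for y
  have "g x = g (s (f x))" if "x \<in> A" for x
  proof -
    have "s (f x) \<in> A \<and> f (s (f x)) = f x"
      unfolding s_def by (rule someI[of _ x]) (use that in simp)
    then show ?thesis using assms(2) that by metis
  qed
  then have "g ` A = (g \<circ> s) ` f ` A"
    by (simp add: image_image cong: image_cong)
  then show ?thesis using assms(1) by (simp add: card_image_le)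
qed

lemma finite_auto: "finite (carrier G) \<Longrightarrow> finite (auto G)"
  by (rule finite_subset[of _ "carrier G \<rightarrow>\<^sub>E carrier G"])
    (auto simp: auto_def Bij_def bij_betw_def PiE_iff extensional_def finite_PiE)

definition centralizer :: "('a, 'b) monoid_scheme \<Rightarrow> 'a set \<Rightarrow> 'a set" where
  "centralizer G H = {g \<in> carrier G. \<forall>h \<in> H. g \<otimes>\<^bsub>G\<^esub> h = h \<otimes>\<^bsub>G\<^esub> g}"

definition normal_core :: "('a, 'b) monoid_scheme \<Rightarrow> 'a set \<Rightarrow> 'a set \<Rightarrow> 'a set" where
  "normal_core G K B = (\<Inter>g \<in> K. (\<lambda>b. g \<otimes>\<^bsub>G\<^esub> b \<otimes>\<^bsub>G\<^esub> inv\<^bsub>G\<^esub> g) ` B)"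

context group
begin

lemma inv_mult_cancel_left [simp]: "x \<in> carrier G \<Longrightarrow> y \<in> carrier G \<Longrightarrow> inv x \<otimes> (x \<otimes> y) = y"
  by (simp add: m_assoc[symmetric])

lemma mult_inv_cancel_left [simp]: "x \<in> carrier G \<Longrightarrow> y \<in> carrier G \<Longrightarrow> x \<otimes> (inv x \<otimes> y) = y"
  by (simp add: m_assoc[symmetric])

lemma normal_in_subgroup_iff:
  assumes "subgroup K G"
  shows "N \<lhd> G\<lparr>carrier := K\<rparr> \<longleftrightarrow>
    subgroup N G \<and> N \<subseteq> K \<and> (\<forall>g \<in> K. \<forall>n \<in> N. g \<otimes> n \<otimes> inv g \<in> N)"
proof -
  interpret K: group "G\<lparr>carrier := K\<rparr>" by (rule subgroup_imp_group[OF assms])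
  have "subgroup N (G\<lparr>carrier := K\<rparr>) \<longleftrightarrow> subgroup N G \<and> N \<subseteq> K"
  proof
    assume N: "subgroup N (G\<lparr>carrier := K\<rparr>)"
    show "subgroup N G \<and> N \<subseteq> K"
      using incl_subgroup[OF assms N] subgroup.subset[OF N] by simp
  qed (use subgroup_incl[OF _ assms] in blast)
  then show ?thesis
    using m_inv_consistent[OF assms] by (simp add: K.normal_inv_iff)
qed

lemma subgroup_centralizer:
  assumes "H \<subseteq> carrier G"
  shows "subgroup (centralizer G H) G"
proof (rule subgroupI)
  fix a b assume a: "a \<in> centralizer G H" and b: "b \<in> centralizer G H"
  show "inv a \<in> centralizer G H"
    using a assms by (auto simp: centralizer_def inv_solve_left inv_solve_right m_assoc)
  show "a \<otimes> b \<in> centralizer G H"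
    using a b assms by (auto simp: centralizer_def) (metis m_assoc subsetD)
next
  have "\<one> \<in> centralizer G H" using assms by (auto simp: centralizer_def)
  then show "centralizer G H \<noteq> {}" by blast
qed (auto simp: centralizer_def)

lemma card_mult_le_card_mult_Int:
  assumes "subgroup N G" "subgroup M G" "subgroup C G" "finite C" "N \<subseteq> C" "M \<subseteq> C"
  shows "card N * card M \<le> card C * card (N \<inter> M)"
proof -
  let ?mult = "\<lambda>p. fst p \<otimes> snd p"
  have fin: "finite N" "finite M" using assms finite_subset by auto
  have "card (N \<times> M) \<le> card (?mult ` (N \<times> M)) * card (N \<inter> M)"
  proof (rule card_le_card_image_mult)
    fix y assume "y \<in> ?mult ` (N \<times> M)"
    then obtain n0 m0 where nm0: "n0 \<in> N" "m0 \<in> M" "y = n0 \<otimes> m0" by auto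
    have G0: "n0 \<in> carrier G" "m0 \<in> carrier G"
      using nm0 assms(1,2) subgroup.mem_carrier by metis+
    have "{p \<in> N \<times> M. ?mult p = y} \<subseteq> (\<lambda>t. (n0 \<otimes> t, inv t \<otimes> m0)) ` (N \<inter> M)"
    proof
      fix p assume "p \<in> {p \<in> N \<times> M. ?mult p = y}"
      then obtain n m where p: "p = (n, m)" "n \<in> N" "m \<in> M" "n \<otimes> m = n0 \<otimes> m0"
        using nm0 by auto
      have G: "n \<in> carrier G" "m \<in> carrier G"
        using p assms(1,2) subgroup.mem_carrier by metis+
      let ?t = "inv n0 \<otimes> n"
      have "inv n0 \<otimes> (n \<otimes> m) = m0" using p(4) G0 G inv_solve_left' by simp
      then have t: "?t = m0 \<otimes> inv m" using G0 G by (simp add: inv_solve_right m_assoc)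
      have "?t \<in> N" using p(2) nm0(1) assms(1) by (simp add: subgroup.m_closed subgroup.m_inv_closed)
      moreover have "?t \<in> M" using t p(3) nm0(2) assms(2) by (simp add: subgroup.m_closed subgroup.m_inv_closed)
      moreover have "n = n0 \<otimes> ?t" using G0 G by (simp add: m_assoc[symmetric])
      moreover have "m = inv ?t \<otimes> m0" using t G0 G by (simp add: inv_mult_group m_assoc)
      ultimately show "p \<in> (\<lambda>t. (n0 \<otimes> t, inv t \<otimes> m0)) ` (N \<inter> M)"
        using p(1) by blast
    qed
    then show "card {p \<in> N \<times> M. ?mult p = y} \<le> card (N \<inter> M)"
      by (meson card_image_le card_mono fin finite_Int finite_imageI le_trans)
  qed (use fin in simp)
  moreover have "?mult ` (N \<times> M) \<subseteq> C"
    using assms by (auto intro!: subgroup.m_closed[OF assms(3)])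
  then have "card (?mult ` (N \<times> M)) \<le> card C" using assms(4) card_mono by blast
  ultimately show ?thesis
    by (metis card_cartesian_product le_trans mult_le_mono1)
qed

lemma card_le_power_card_Inter:
  assumes "finite S" "subgroup C G" "finite C"
    and "\<And>N. N \<in> S \<Longrightarrow> subgroup N G \<and> N \<subseteq> C \<and> card C \<le> J * card N"
  shows "card C \<le> J ^ card S * card (C \<inter> \<Inter>S)"
  using assms(1,4)
proof (induction S rule: finite_induct)
  case empty
  then show ?case by simp
next
  case (insert N S)
  let ?M = "C \<inter> \<Inter>S"
  have IH: "card C \<le> J ^ card S * card ?M" using insert.IH insert.prems by blast
  have N: "subgroup N G" "N \<subseteq> C" "card C \<le> J * card N" using insert.prems by blast+
  have "subgroup (\<Inter>(insert C S)) G" using subgroups_Inter[of "insert C S"] assms(2) insert.prems by blast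
  then have M: "subgroup ?M G" by simp
  have "card C * card C \<le> (J * card N) * (J ^ card S * card ?M)"
    using IH N(3) by (rule mult_le_mono[rotated])
  also have "\<dots> = J ^ Suc (card S) * (card N * card ?M)" by (simp add: algebra_simps)
  also have "\<dots> \<le> J ^ Suc (card S) * (card C * card (N \<inter> ?M))"
    using card_mult_le_card_mult_Int[OF N(1) M assms(2,3) N(2)] by simp
  finally have "card C * card C \<le> card C * (J ^ Suc (card S) * card (N \<inter> ?M))"
    by (simp add: algebra_simps)
  moreover have "card C > 0"
    using assms(2,3) subgroup.one_closed card_gt_0_iff by blast
  ultimately have "card C \<le> J ^ Suc (card S) * card (N \<inter> ?M)" by simp
  moreover have "C \<inter> \<Inter>(insert N S) = N \<inter> ?M" using N(2) by blast
  ultimately show ?case using insert.hyps by simp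
qed

lemma card_le_card_image_mult_card:
  assumes "finite K" "K \<subseteq> carrier G" "finite C"
    and "\<And>g k. g \<in> K \<Longrightarrow> k \<in> K \<Longrightarrow> f g = f k \<Longrightarrow> inv g \<otimes> k \<in> C"
  shows "card K \<le> card (f ` K) * card C"
proof (rule card_le_card_image_mult[OF assms(1)])
  fix y assume "y \<in> f ` K"
  then obtain g where g: "g \<in> K" "y = f g" by blast
  have "{k \<in> K. f k = y} \<subseteq> (\<lambda>c. g \<otimes> c) ` C"
  proof
    fix k assume "k \<in> {k \<in> K. f k = y}"
    then have "k \<in> K" "inv g \<otimes> k \<in> C" using g assms(4) by auto
    moreover have "g \<in> carrier G" "k \<in> carrier G" using g(1) \<open>k \<in> K\<close> assms(2) by blast+
    then have "k = g \<otimes> (inv g \<otimes> k)" by (simp add: m_assoc[symmetric])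
    ultimately show "k \<in> (\<lambda>c. g \<otimes> c) ` C" by blast
  qed
  then show "card {k \<in> K. f k = y} \<le> card C"
    by (meson card_image_le card_mono assms(3) finite_imageI le_trans)
qed

lemma subgroup_conj_image:
  assumes "g \<in> carrier G" "subgroup B G"
  shows "subgroup ((\<lambda>b. g \<otimes> b \<otimes> inv g) ` B) G"
proof -
  have "(\<lambda>b. g \<otimes> b \<otimes> inv g) ` B = (g <#\<^bsub>G\<^esub> B) #> inv g"
    using assms subgroup.subset by (auto simp: l_coset_def r_coset_def)
  then show ?thesis using subgroup_conjugation_is_surj2[OF assms] by simp
qed

lemma card_conj_image:
  assumes "g \<in> carrier G" "B \<subseteq> carrier G"
  shows "card ((\<lambda>b. g \<otimes> b \<otimes> inv g) ` B) = card B"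
  by (rule card_image, rule inj_onI) (use assms conjugation_is_inj in blast)

lemma conj_image_eq_if_normalizes:
  assumes "subgroup C G" "B \<subseteq> carrier G" "\<And>c b. c \<in> C \<Longrightarrow> b \<in> B \<Longrightarrow> c \<otimes> b \<otimes> inv c \<in> B"
    and "g \<in> carrier G" "k \<in> carrier G" "inv g \<otimes> k \<in> C"
  shows "(\<lambda>b. k \<otimes> b \<otimes> inv k) ` B = (\<lambda>b. g \<otimes> b \<otimes> inv g) ` B"
proof -
  define c where "c = inv g \<otimes> k"
  have c: "c \<in> C" using assms(6) unfolding c_def .
  have c': "inv c \<in> C" "c \<in> carrier G"
    using subgroup.m_inv_closed[OF assms(1) c] subgroup.mem_carrier[OF assms(1) c] .
  have conj_c: "(\<lambda>b. c \<otimes> b \<otimes> inv c) ` B = B"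
  proof
    show "(\<lambda>b. c \<otimes> b \<otimes> inv c) ` B \<subseteq> B" using assms(3) c by blast
    show "B \<subseteq> (\<lambda>b. c \<otimes> b \<otimes> inv c) ` B"
    proof
      fix b assume b: "b \<in> B"
      then have "inv c \<otimes> b \<otimes> c \<in> B" using assms(3)[OF c'(1) b] c'(2) by simp
      moreover have "b = c \<otimes> (inv c \<otimes> b \<otimes> c) \<otimes> inv c"
        using conjugation_is_surj b assms(2) c'(2) by auto
      ultimately show "b \<in> (\<lambda>b. c \<otimes> b \<otimes> inv c) ` B" by blast
    qed
  qed
  have k: "k = g \<otimes> c" using assms(4,5) by (simp add: c_def m_assoc[symmetric])
  have "(\<lambda>b. k \<otimes> b \<otimes> inv k) ` B = (\<lambda>b. g \<otimes> (c \<otimes> b \<otimes> inv c) \<otimes> inv g) ` B"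
    using assms(2,4) c'(2) by (intro image_cong) (auto simp: k m_assoc inv_mult_group)
  also have "\<dots> = (\<lambda>b. g \<otimes> b \<otimes> inv g) ` (\<lambda>b. c \<otimes> b \<otimes> inv c) ` B"
    by (simp add: image_image)
  finally show ?thesis unfolding conj_c .
qed

lemma normal_core_subset:
  assumes "\<one> \<in> K" "B \<subseteq> carrier G"
  shows "normal_core G K B \<subseteq> B"
proof -
  have "normal_core G K B \<subseteq> (\<lambda>b. \<one> \<otimes> b \<otimes> inv \<one>) ` B"
    unfolding normal_core_def using assms(1) by (rule INF_lower)
  also have "\<dots> = B" using assms(2) by (auto simp: subsetD)
  finally show ?thesis .
qed

lemma normal_core_normal:
  assumes K: "subgroup K G" and B: "subgroup B G" "B \<subseteq> K"
  shows "normal_core G K B \<lhd> G\<lparr>carrier := K\<rparr>"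
proof -
  let ?A = "normal_core G K B"
  have KG: "g \<in> carrier G" if "g \<in> K" for g using subgroup.mem_carrier[OF K that] .
  have BG: "B \<subseteq> carrier G" using subgroup.subset[OF B(1)] .
  have "subgroup ?A G"
    unfolding normal_core_def
  proof (rule subgroups_Inter)
    show "(\<lambda>g. (\<lambda>b. g \<otimes> b \<otimes> inv g) ` B) ` K \<noteq> {}" using subgroup.one_closed[OF K] by blast
  qed (auto intro: subgroup_conj_image[OF KG B(1)])
  moreover have "?A \<subseteq> K" using normal_core_subset[OF subgroup.one_closed[OF K] BG] B(2) by blast
  moreover have "x \<otimes> h \<otimes> inv x \<in> ?A" if x: "x \<in> K" and h: "h \<in> ?A" for x h
  proof -
    have "x \<otimes> h \<otimes> inv x \<in> (\<lambda>b. g \<otimes> b \<otimes> inv g) ` B" if g: "g \<in> K" for g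
    proof -
      have "inv x \<otimes> g \<in> K" using K x g by (simp add: subgroup.m_closed subgroup.m_inv_closed)
      then obtain b where b: "b \<in> B" "h = (inv x \<otimes> g) \<otimes> b \<otimes> inv (inv x \<otimes> g)"
        using h unfolding normal_core_def by blast
      have "x \<otimes> h \<otimes> inv x = g \<otimes> b \<otimes> inv g"
        using b KG[OF x] KG[OF g] BG by (simp add: m_assoc inv_mult_group subsetD)
      then show ?thesis using b(1) by blast
    qed
    then show ?thesis unfolding normal_core_def by blast
  qed
  ultimately show ?thesis unfolding normal_in_subgroup_iff[OF K] by blast
qed

lemma card_le_power_card_normal_core:
  assumes C: "subgroup C G" "finite C" and K: "subgroup K G" "finite K"
    and B: "subgroup B G" "B \<subseteq> C" "card C \<le> J * card B"
    and K_normalizes_C: "\<And>g c. g \<in> K \<Longrightarrow> c \<in> C \<Longrightarrow> g \<otimes> c \<otimes> inv g \<in> C"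
  shows "card C \<le> J ^ card ((\<lambda>g. (\<lambda>b. g \<otimes> b \<otimes> inv g) ` B) ` K) * card (normal_core G K B)"
proof -
  let ?S = "(\<lambda>g. (\<lambda>b. g \<otimes> b \<otimes> inv g) ` B) ` K"
  have KG: "g \<in> carrier G" if "g \<in> K" for g using subgroup.mem_carrier[OF K(1) that] .
  have BG: "B \<subseteq> carrier G" using subgroup.subset[OF B(1)] .
  have "C \<inter> \<Inter>?S = normal_core G K B"
    using normal_core_subset[OF subgroup.one_closed[OF K(1)] BG] B(2)
    unfolding normal_core_def by blast
  moreover have "card C \<le> J ^ card ?S * card (C \<inter> \<Inter>?S)"
  proof (rule card_le_power_card_Inter[OF _ C])
    fix N assume "N \<in> ?S"
    then obtain g where g: "g \<in> K" "N = (\<lambda>b. g \<otimes> b \<otimes> inv g) ` B" by blast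
    then show "subgroup N G \<and> N \<subseteq> C \<and> card C \<le> J * card N"
      using subgroup_conj_image[OF KG B(1)] card_conj_image[OF KG BG] K_normalizes_C B by auto
  qed (use K(2) in simp)
  ultimately show ?thesis by simp
qed

lemma normal_abelian_subgroup_of_bounded_index:
  assumes K: "subgroup K G" "finite K" and "C \<lhd> G\<lparr>carrier := K\<rparr>"
    and "B \<lhd> G\<lparr>carrier := C\<rparr>" and B_comm: "\<forall>x \<in> B. \<forall>y \<in> B. x \<otimes> y = y \<otimes> x"
    and B_index: "card C \<le> J * card B"
    and f: "\<And>g k. g \<in> K \<Longrightarrow> k \<in> K \<Longrightarrow> f g = f k \<Longrightarrow> inv g \<otimes> k \<in> C"
  shows "\<exists>A. A \<lhd> G\<lparr>carrier := K\<rparr> \<and> (\<forall>x \<in> A. \<forall>y \<in> A. x \<otimes> y = y \<otimes> x) \<and>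
           card K \<le> card (f ` K) * J ^ card (f ` K) * card A"
proof (intro exI conjI)
  let ?A = "normal_core G K B"
  let ?n = "card (f ` K)"
  have C: "subgroup C G" "C \<subseteq> K" "\<And>g c. g \<in> K \<Longrightarrow> c \<in> C \<Longrightarrow> g \<otimes> c \<otimes> inv g \<in> C"
    using \<open>C \<lhd> G\<lparr>carrier := K\<rparr>\<close> normal_in_subgroup_iff[OF K(1)] by auto
  have B: "subgroup B G" "B \<subseteq> C" "\<And>c b. c \<in> C \<Longrightarrow> b \<in> B \<Longrightarrow> c \<otimes> b \<otimes> inv c \<in> B"
    using \<open>B \<lhd> G\<lparr>carrier := C\<rparr>\<close> normal_in_subgroup_iff[OF C(1)] by auto
  have KG: "K \<subseteq> carrier G" using subgroup.subset[OF K(1)] .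
  have BG: "B \<subseteq> carrier G" using subgroup.subset[OF B(1)] .
  have fin_C: "finite C" using C(2) K(2) finite_subset by blast
  have A_B: "?A \<subseteq> B" using normal_core_subset[OF subgroup.one_closed[OF K(1)] BG] .
  show "?A \<lhd> G\<lparr>carrier := K\<rparr>" using normal_core_normal[OF K(1) B(1)] B(2) C(2) by blast
  show "\<forall>x \<in> ?A. \<forall>y \<in> ?A. x \<otimes> y = y \<otimes> x" using A_B B_comm by blast
  let ?S = "(\<lambda>g. (\<lambda>b. g \<otimes> b \<otimes> inv g) ` B) ` K"
  have "card C \<le> J ^ card ?S * card ?A"
    by (rule card_le_power_card_normal_core[OF C(1) fin_C K B(1,2) B_index]) (fact C(3))
  moreover have "card ?S \<le> ?n"
    by (rule card_image_le_card_image[OF K(2)])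
      (use conj_image_eq_if_normalizes[OF C(1) BG B(3)] f KG in blast)
  moreover have "0 < card C" using C(1) fin_C subgroup.one_closed card_gt_0_iff by blast
  then have "1 \<le> J" using B_index by (cases J) auto
  ultimately have "card C \<le> J ^ ?n * card ?A"
    by (meson le_trans mult_le_mono1 power_increasing)
  moreover have "card K \<le> ?n * card C"
    by (rule card_le_card_image_mult_card[OF K(2) KG fin_C f])
  ultimately show "card K \<le> ?n * J ^ ?n * card ?A"
    by (metis (no_types, lifting) le_trans mult.assoc mult_le_mono2)
qed

end

lemma (in group_hom) subgroup_vimage:
  assumes "subgroup A H"
  shows "subgroup (carrier G \<inter> h -` A) G"
  by (rule G.subgroupI)
    (use assms subgroup.one_closed subgroup.m_inv_closed subgroup.m_closed in \<open>force+\<close>)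

lemma (in group_hom) normal_abelian_subgroup_of_jordan_bound:
  assumes J: "jordan_bound H J" and C: "subgroup C G" "finite C" "inj_on h C"
  shows "\<exists>B. B \<lhd> G\<lparr>carrier := C\<rparr> \<and> (\<forall>x \<in> B. \<forall>y \<in> B. x \<otimes> y = y \<otimes> x) \<and> card C \<le> J * card B"
proof -
  have CG: "C \<subseteq> carrier G" using subgroup.subset[OF C(1)] .
  have C': "subgroup (h ` C) H" "finite (h ` C)"
    using subgroup_img_is_subgroup[OF C(1)] C(2) by auto
  then obtain A' where A': "A' \<lhd> H\<lparr>carrier := h ` C\<rparr>"
      "\<forall>x \<in> A'. \<forall>y \<in> A'. x \<otimes>\<^bsub>H\<^esub> y = y \<otimes>\<^bsub>H\<^esub> x" "card (h ` C) \<le> J * card A'"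
    using J unfolding jordan_bound_def by blast
  then have A'_sub: "subgroup A' H" "A' \<subseteq> h ` C"
    and A'_normal: "\<forall>x \<in> h ` C. \<forall>a \<in> A'. x \<otimes>\<^bsub>H\<^esub> a \<otimes>\<^bsub>H\<^esub> inv\<^bsub>H\<^esub> x \<in> A'"
    using H.normal_in_subgroup_iff[OF C'(1)] by auto
  define B where "B = C \<inter> (carrier G \<inter> h -` A')"
  have "subgroup B G" unfolding B_def by (rule G.subgroups_Inter_pair[OF C(1) subgroup_vimage[OF A'_sub(1)]])
  moreover have B_C: "B \<subseteq> C" unfolding B_def by blast
  moreover have "\<forall>c \<in> C. \<forall>b \<in> B. c \<otimes> b \<otimes> inv c \<in> B"
    using B_C CG A'_normal subgroup.m_closed[OF C(1)] subgroup.m_inv_closed[OF C(1)]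
    unfolding B_def by (auto simp: subsetD)
  ultimately have "B \<lhd> G\<lparr>carrier := C\<rparr>" using G.normal_in_subgroup_iff[OF C(1)] by blast
  moreover have "x \<otimes> y = y \<otimes> x" if "x \<in> B" "y \<in> B" for x y
  proof (rule inj_onD[OF C(3)])
    show "h (x \<otimes> y) = h (y \<otimes> x)" using that A'(2) unfolding B_def by auto
    show "x \<otimes> y \<in> C" "y \<otimes> x \<in> C" using that B_C subgroup.m_closed[OF C(1)] by blast+
  qed
  moreover have "card C \<le> J * card B"
  proof -
    have "h ` B = A'" using A'_sub(2) CG unfolding B_def by blast
    then have "card B = card A'" using card_image[OF inj_on_subset[OF C(3) B_C]] by simp
    then show ?thesis using A'(3) card_image[OF C(3)] by simp
  qed
  ultimately show ?thesis by blast
qed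

context normal
begin

lemma centralizer_normal: "centralizer G H \<lhd> G"
proof -
  have "x \<otimes> c \<otimes> inv x \<in> centralizer G H" if x: "x \<in> carrier G" and c: "c \<in> centralizer G H" for x c
  proof -
    have cG: "c \<in> carrier G" using c unfolding centralizer_def by blast
    have "x \<otimes> c \<otimes> inv x \<otimes> h = h \<otimes> (x \<otimes> c \<otimes> inv x)" if h: "h \<in> H" for h
    proof -
      have hG: "h \<in> carrier G" using h subset by blast
      have "inv x \<otimes> h \<otimes> x \<in> H" using inv_op_closed1 x h by blast
      then have comm: "c \<otimes> (inv x \<otimes> h \<otimes> x) = (inv x \<otimes> h \<otimes> x) \<otimes> c"
        using c unfolding centralizer_def by blast
      have "x \<otimes> c \<otimes> inv x \<otimes> h = x \<otimes> (c \<otimes> (inv x \<otimes> h \<otimes> x)) \<otimes> inv x"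
        using x cG hG by (simp add: m_assoc)
      also have "\<dots> = x \<otimes> ((inv x \<otimes> h \<otimes> x) \<otimes> c) \<otimes> inv x" by (simp only: comm)
      also have "\<dots> = h \<otimes> (x \<otimes> c \<otimes> inv x)"
        using x cG hG by (simp add: m_assoc[symmetric])
      finally show ?thesis .
    qed
    then show ?thesis using x cG unfolding centralizer_def by simp
  qed
  then show ?thesis using normal_inv_iff subgroup_centralizer[OF subset] by blast
qed

lemma conj_restrict_in_auto:
  assumes g: "g \<in> carrier G"
  shows "(\<lambda>x \<in> H. g \<otimes> x \<otimes> inv g) \<in> auto (G\<lparr>carrier := H\<rparr>)"
proof -
  let ?f = "\<lambda>x \<in> H. g \<otimes> x \<otimes> inv g"
  have HG: "x \<in> carrier G" if "x \<in> H" for x using that subset by blast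
  have "?f \<in> hom (G\<lparr>carrier := H\<rparr>) (G\<lparr>carrier := H\<rparr>)"
    unfolding hom_def using g inv_op_closed2 HG by (auto simp: m_assoc)
  moreover have "bij_betw ?f H H"
  proof (rule bij_betw_byWitness[where f' = "\<lambda>x. inv g \<otimes> x \<otimes> g"])
    show "\<forall>x \<in> H. inv g \<otimes> ?f x \<otimes> g = x" using g HG by (simp add: m_assoc)
    show "\<forall>x \<in> H. ?f (inv g \<otimes> x \<otimes> g) = x" using g HG inv_op_closed1 by (simp add: m_assoc)
    show "?f ` H \<subseteq> H" using g inv_op_closed2 by auto
    show "(\<lambda>x. inv g \<otimes> x \<otimes> g) ` H \<subseteq> H" using g inv_op_closed1 by auto
  qed
  ultimately show ?thesis unfolding auto_def Bij_def by simp
qed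

lemma conj_restrict_eq_imp_centralizer:
  assumes g: "g \<in> carrier G" and k: "k \<in> carrier G"
    and eq: "(\<lambda>x \<in> H. g \<otimes> x \<otimes> inv g) = (\<lambda>x \<in> H. k \<otimes> x \<otimes> inv k)"
  shows "inv g \<otimes> k \<in> centralizer G H"
proof -
  have "inv g \<otimes> k \<otimes> h = h \<otimes> (inv g \<otimes> k)" if h: "h \<in> H" for h
  proof -
    have hG: "h \<in> carrier G" using h subset by blast
    have "inv g \<otimes> k \<otimes> h = inv g \<otimes> (k \<otimes> h \<otimes> inv k) \<otimes> k"
      using g k hG by (simp add: m_assoc)
    also have "\<dots> = inv g \<otimes> (g \<otimes> h \<otimes> inv g) \<otimes> k" using fun_cong[OF eq, of h] h by simp
    also have "\<dots> = h \<otimes> (inv g \<otimes> k)" using g k hG by (simp add: m_assoc[symmetric])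
    finally show ?thesis .
  qed
  then show ?thesis using g k unfolding centralizer_def by simp
qed

lemma group_hom_r_coset: "group_hom G (G Mod H) (\<lambda>c. H #> c)"
  by (intro group_hom.intro group_hom_axioms.intro is_group factorgroup_is_group r_coset_hom_Mod)

lemma inj_on_r_coset:
  assumes C: "subgroup C G" and "C \<inter> H \<subseteq> {\<one>}"
  shows "inj_on (\<lambda>c. H #> c) C"
proof -
  note hom = group_hom_r_coset
  have "kernel (G\<lparr>carrier := C\<rparr>) (G Mod H) (\<lambda>c. H #> c) = {\<one>}"
    using assms subgroup.one_closed[OF C] subgroup.mem_carrier[OF C]
      coset_join1[OF _ _ subgroup_axioms] coset_join2[OF _ subgroup_axioms]
    unfolding kernel_def by auto
  then show ?thesis using group_hom.inj_on_subgroup_iff_trivial_ker[OF hom C] by simp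
qed

lemma finite_auto_normal: "finite H \<Longrightarrow> finite (auto (G\<lparr>carrier := H\<rparr>))"
  using finite_auto[of "G\<lparr>carrier := H\<rparr>"] by simp

lemma jordan_bound_of_trivial_center:
  assumes "finite H" and center: "group_center (G\<lparr>carrier := H\<rparr>) = {\<one>}"
    and J: "jordan_bound (G Mod H) J" "0 < J"
  shows "jordan_bound G (card (auto (G\<lparr>carrier := H\<rparr>)) * J ^ card (auto (G\<lparr>carrier := H\<rparr>)))"
  unfolding jordan_bound_def
proof (intro allI impI)
  fix K assume "subgroup K G \<and> finite K"
  then have K: "subgroup K G" "finite K" by auto
  let ?a = "card (auto (G\<lparr>carrier := H\<rparr>))"
  define C where "C = centralizer G H \<inter> K"
  define conj where "conj g = (\<lambda>x \<in> H. g \<otimes> x \<otimes> inv g)" for g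
  have KG: "g \<in> carrier G" if "g \<in> K" for g using subgroup.mem_carrier[OF K(1) that] .
  have C: "C \<lhd> G\<lparr>carrier := K\<rparr>"
    unfolding C_def by (rule normal_Int_subgroup[OF K(1) centralizer_normal])
  then have C_sub: "subgroup C G" and "C \<subseteq> K" using normal_in_subgroup_iff[OF K(1)] by auto
  have "C \<inter> H \<subseteq> group_center (G\<lparr>carrier := H\<rparr>)"
    unfolding C_def centralizer_def group_center_def by auto
  then have "inj_on (\<lambda>c. H #> c) C" using inj_on_r_coset[OF C_sub] center by simp
  moreover have "finite C" using K(2) \<open>C \<subseteq> K\<close> finite_subset by blast
  ultimately obtain B where B: "B \<lhd> G\<lparr>carrier := C\<rparr>" "\<forall>x \<in> B. \<forall>y \<in> B. x \<otimes> y = y \<otimes> x"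
      "card C \<le> J * card B"
    using group_hom.normal_abelian_subgroup_of_jordan_bound[OF group_hom_r_coset J(1) C_sub] by blast
  have conj_fibres: "inv g \<otimes> k \<in> C" if "g \<in> K" "k \<in> K" "conj g = conj k" for g k
    using that conj_restrict_eq_imp_centralizer[OF KG[OF that(1)] KG[OF that(2)]] K(1)
    unfolding C_def conj_def by (simp add: subgroup.m_closed subgroup.m_inv_closed)
  obtain A where A: "A \<lhd> G\<lparr>carrier := K\<rparr>" "\<forall>x \<in> A. \<forall>y \<in> A. x \<otimes> y = y \<otimes> x"
      "card K \<le> card (conj ` K) * J ^ card (conj ` K) * card A"
    using normal_abelian_subgroup_of_bounded_index[OF K C B conj_fibres] by blast
  have "card (conj ` K) \<le> ?a"
    by (rule card_mono[OF finite_auto_normal[OF \<open>finite H\<close>]])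
      (use conj_restrict_in_auto KG in \<open>auto simp: conj_def\<close>)
  then have "card (conj ` K) * J ^ card (conj ` K) \<le> ?a * J ^ ?a"
    using J(2) by (intro mult_le_mono power_increasing) auto
  then have "card K \<le> ?a * J ^ ?a * card A"
    using A(3) mult_le_mono1 le_trans by blast
  then show "\<exists>A. A \<subseteq> K \<and> A \<lhd> G\<lparr>carrier := K\<rparr> \<and> (\<forall>x \<in> A. \<forall>y \<in> A. x \<otimes> y = y \<otimes> x) \<and>
      card K \<le> ?a * J ^ ?a * card A"
    using A(1,2) normal_in_subgroup_iff[OF K(1)] by blast
qed

end

lemma jordan_constant_bound:
  assumes "jordan_group G"
  shows "0 < jordan_constant G \<and> jordan_bound G (jordan_constant G)"
  using assms unfolding jordan_group_def jordan_constant_def by (rule LeastI_ex)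

lemma jordan_constant_le:
  assumes "0 < d" "jordan_bound G d"
  shows "jordan_constant G \<le> d"
  unfolding jordan_constant_def using assms by (blast intro: Least_le)

theorem corollary1p21:
  fixes G :: "('a, 'b) monoid_scheme" and H :: "'a set"
  assumes "group G"
    and "H \<lhd> G"
    and "finite H"
    and "group_center (G\<lparr>carrier := H\<rparr>) = {\<one>\<^bsub>G\<^esub>}"
    and "jordan_group (G Mod H)"
  shows "jordan_group G \<and>
         jordan_constant G \<le>
           card (auto (G\<lparr>carrier := H\<rparr>)) *
           jordan_constant (G Mod H) ^ card (auto (G\<lparr>carrier := H\<rparr>))"
proof -
  interpret normal H G by (rule assms(2))
  let ?a = "card (auto (G\<lparr>carrier := H\<rparr>))"
  let ?J = "jordan_constant (G Mod H)"
  have J: "0 < ?J" "jordan_bound (G Mod H) ?J" using jordan_constant_bound[OF assms(5)] by auto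
  have "0 < ?a"
    using group.id_in_auto[OF subgroup_imp_group[OF subgroup_axioms]] finite_auto_normal[OF assms(3)]
    unfolding card_gt_0_iff by blast
  then have pos: "0 < ?a * ?J ^ ?a" using J(1) by simp
  have "jordan_bound G (?a * ?J ^ ?a)" by (rule jordan_bound_of_trivial_center[OF assms(3,4) J(2,1)])
  then show ?thesis using pos jordan_constant_le unfolding jordan_group_def by blast
qed

end
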